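(* Let $G$ be a connected graph with $n\geq 2$ vertices and $m$ edges, and let $S(G)$ be its subdivision. Then $$R^+(S(G))=4R^+(G)+4R^*(G)+(m+n)(m-n+1)+2m(m-n).$$
   Context: All graphs are finite, undirected, without loops or multiple edges. For a connected graph $H$ and vertices $i,j$, the resistance distance $\Omega_{ij}$ is the effective resistance between $i$ and $j$ in the electrical network obtained from $H$ by replacing each edge by a unit resistor. With $d_i$ the degree of vertex $i$ in $H$ and sums over unordered pairs of distinct vertices of $H$: the Kirchhoff index is $R(H)=\sum_{\{i,j\}\subseteq V(H)}\Omega_{ij}$, the additive degree-Kirchhoff index is $R^+(H)=\sum_{\{i,j\}\subseteq V(H)}(d_i+d_j)\Omega_{ij}$, and the multiplicative degree-Kirchhoff index is $R^*(H)=\sum_{\{i,j\}\subseteq V(H)}d_id_j\Omega_{ij}$ (all computed in $H$ itself, with degrees and resistances of $H$). The subdivision $S(G)$ is the graph obtained from $G$ by replacing every edge with a path of length two (i.e., inserting one new vertex of degree 2 on each edge). *)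

theory Defs
  imports Complex_Main
begin

definition simple_graph :: "'a set \<Rightarrow> ('a \<Rightarrow> 'a \<Rightarrow> bool) \<Rightarrow> bool" where
  "simple_graph V E \<longleftrightarrow> finite V \<and> (\<forall>x y. E x y \<longrightarrow> x \<in> V \<and> y \<in> V)
     \<and> (\<forall>x y. E x y \<longrightarrow> E y x) \<and> (\<forall>x. \<not> E x x)"

definition connected_graph :: "'a set \<Rightarrow> ('a \<Rightarrow> 'a \<Rightarrow> bool) \<Rightarrow> bool" where
  "connected_graph V E \<longleftrightarrow> (\<forall>x\<in>V. \<forall>y\<in>V. E\<^sup>*\<^sup>* x y)"

definition edges :: "'a set \<Rightarrow> ('a \<Rightarrow> 'a \<Rightarrow> bool) \<Rightarrow> 'a set set" where
  "edges V E = {{a, b} | a b. a \<in> V \<and> b \<in> V \<and> E a b}"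

definition degree :: "'a set \<Rightarrow> ('a \<Rightarrow> 'a \<Rightarrow> bool) \<Rightarrow> 'a \<Rightarrow> real" where
  "degree V E k = real (card {l\<in>V. E k l})"

text \<open>Effective resistance between i and j with unit resistors on the edges:
  the voltage difference v i - v j, where v is a potential realising a unit
  current injected at i and extracted at j (Kirchhoff's current law at every
  vertex, Ohm's law with unit resistances).\<close>
definition resistance :: "'a set \<Rightarrow> ('a \<Rightarrow> 'a \<Rightarrow> bool) \<Rightarrow> 'a \<Rightarrow> 'a \<Rightarrow> real" where
  "resistance V E i j = (THE r. \<exists>v :: 'a \<Rightarrow> real.
      (\<forall>k\<in>V. (\<Sum>l\<in>{l\<in>V. E k l}. v k - v l)
               = (if k = i then 1 else 0) - (if k = j then 1 else 0))
      \<and> r = v i - v j)"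

text \<open>Sums over unordered pairs {i,j} of distinct vertices, written as half of
  the sum over ordered pairs (all summands are symmetric in i, j).\<close>
definition kirchhoff :: "'a set \<Rightarrow> ('a \<Rightarrow> 'a \<Rightarrow> bool) \<Rightarrow> real" where
  "kirchhoff V E = (\<Sum>i\<in>V. \<Sum>j\<in>V - {i}. resistance V E i j) / 2"

definition add_deg_kirchhoff :: "'a set \<Rightarrow> ('a \<Rightarrow> 'a \<Rightarrow> bool) \<Rightarrow> real" where
  "add_deg_kirchhoff V E = (\<Sum>i\<in>V. \<Sum>j\<in>V - {i}.
      (degree V E i + degree V E j) * resistance V E i j) / 2"

definition mul_deg_kirchhoff :: "'a set \<Rightarrow> ('a \<Rightarrow> 'a \<Rightarrow> bool) \<Rightarrow> real" where
  "mul_deg_kirchhoff V E = (\<Sum>i\<in>V. \<Sum>j\<in>V - {i}.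
      degree V E i * degree V E j * resistance V E i j) / 2"

definition subdiv_vertices :: "'a set \<Rightarrow> ('a \<Rightarrow> 'a \<Rightarrow> bool) \<Rightarrow> ('a + 'a set) set" where
  "subdiv_vertices V E = Inl ` V \<union> Inr ` edges V E"

fun subdiv_adj_aux :: "'a set set \<Rightarrow> ('a + 'a set) \<Rightarrow> ('a + 'a set) \<Rightarrow> bool" where
  "subdiv_adj_aux Es (Inl a) (Inr e) = (e \<in> Es \<and> a \<in> e)"
| "subdiv_adj_aux Es (Inr e) (Inl a) = (e \<in> Es \<and> a \<in> e)"
| "subdiv_adj_aux Es _ _ = False"

definition subdiv_adj :: "'a set \<Rightarrow> ('a \<Rightarrow> 'a \<Rightarrow> bool) \<Rightarrow> ('a + 'a set) \<Rightarrow> ('a + 'a set) \<Rightarrow> bool" where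
  "subdiv_adj V E = subdiv_adj_aux (edges V E)"

end

theory Submission
  imports Defs "Jordan_Normal_Form.Determinant"
begin

text \<open>A unit current between two vertices of S(G) is pushed down to G by splitting the source
  at each new vertex equally between the endpoints of its edge.  A potential for the pushed-down
  current in G, doubled at the old vertices (each edge of G becomes a path of resistance 2) and
  averaged at the new ones, is a potential for the original current in S(G).  Writing the
  potentials in G through Green's functions with a common ground, every resistance of S(G)
  becomes an explicit combination of resistances of G.  Summing with the degrees of S(G)
  (the old degrees at old vertices, 2 at new ones), Foster's theorem (the resistances across
  the edges of G add up to n - 1) and the handshake lemma reduce everything to
  the additive and multiplicative degree-Kirchhoff indices of G, n and m.\<close>

lemma square_linear_system_solvable:
  fixes M :: "'i \<Rightarrow> 'i \<Rightarrow> real"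
  assumes I: "finite I"
    and inj: "\<And>u k. \<forall>k\<in>I. (\<Sum>l\<in>I. M k l * u l) = 0 \<Longrightarrow> k \<in> I \<Longrightarrow> u k = 0"
  shows "\<exists>u. \<forall>k\<in>I. (\<Sum>l\<in>I. M k l * u l) = \<beta> k"
proof -
  define N where "N = card I"
  obtain h where h: "bij_betw h {0..<N} I"
    using ex_bij_betw_nat_finite[OF I] unfolding N_def by blast
  define A :: "real mat" where "A = mat N N (\<lambda>(i, j). M (h i) (h j))"
  define fun_of :: "real vec \<Rightarrow> 'i \<Rightarrow> real" where
    "fun_of x l = x $ the_inv_into {0..<N} h l" for x l
  have A: "A \<in> carrier_mat N N" by (simp add: A_def)
  have h_inv: "the_inv_into {0..<N} h (h j) = j" if "j < N" for j
    using that h by (simp add: bij_betw_def the_inv_into_f_f)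
  have mult_A: "(A *\<^sub>v x) $ i = (\<Sum>l\<in>I. M (h i) l * fun_of x l)"
    if "i < N" "x \<in> carrier_vec N" for x i
  proof -
    have "(A *\<^sub>v x) $ i = (\<Sum>j\<in>{0..<N}. M (h i) (h j) * x $ j)"
      using that by (simp add: A_def scalar_prod_def mult.commute)
    also have "\<dots> = (\<Sum>j\<in>{0..<N}. M (h i) (h j) * fun_of x (h j))"
      by (intro sum.cong refl) (simp add: fun_of_def h_inv)
    also have "\<dots> = (\<Sum>l\<in>I. M (h i) l * fun_of x l)"
      by (rule sum.reindex_bij_betw[OF h])
    finally show ?thesis .
  qed
  have "\<not> (\<exists>x. x \<in> carrier_vec N \<and> x \<noteq> 0\<^sub>v N \<and> A *\<^sub>v x = 0\<^sub>v N)"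
  proof (intro notI, elim exE conjE)
    fix x assume x: "x \<in> carrier_vec N" and "x \<noteq> 0\<^sub>v N" and Ax: "A *\<^sub>v x = 0\<^sub>v N"
    have "\<forall>k\<in>I. (\<Sum>l\<in>I. M k l * fun_of x l) = 0"
    proof
      fix k assume "k \<in> I"
      then obtain i where "i < N" "k = h i" using h by (auto simp: bij_betw_def)
      then show "(\<Sum>l\<in>I. M k l * fun_of x l) = 0"
        using Ax mult_A[of i x] x by (metis index_zero_vec(1))
    qed
    then have "x $ j = 0" if "j < N" for j
      using inj[of "fun_of x" "h j"] that h by (auto simp: fun_of_def h_inv bij_betw_def)
    with x \<open>x \<noteq> 0\<^sub>v N\<close> show False by auto
  qed
  then have "det A \<noteq> 0" by (simp add: det_0_iff_vec_prod_zero_field[OF A])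
  from det_non_zero_imp_unit[OF A this, of "()"]
  obtain B where B: "B \<in> carrier_mat N N" and AB: "A * B = 1\<^sub>m N"
    unfolding Units_def ring_mat_def by auto
  define x where "x = B *\<^sub>v vec N (\<lambda>i. \<beta> (h i))"
  have x: "x \<in> carrier_vec N" using B by (simp add: x_def)
  have "A *\<^sub>v x = vec N (\<lambda>i. \<beta> (h i))"
    using A B by (simp add: x_def assoc_mult_mat_vec[symmetric, of A N N B N] AB)
  then have "(\<Sum>l\<in>I. M (h i) l * fun_of x l) = \<beta> (h i)" if "i < N" for i
    using mult_A[OF that x] that by simp
  then have "\<forall>k\<in>I. (\<Sum>l\<in>I. M k l * fun_of x l) = \<beta> k"
    using h by (auto simp: bij_betw_def)
  then show ?thesis by blast
qed

section \<open>Potentials and the graph Laplacian\<close>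

definition neighbours :: "'a set \<Rightarrow> ('a \<Rightarrow> 'a \<Rightarrow> bool) \<Rightarrow> 'a \<Rightarrow> 'a set" where
  "neighbours V E k = {l\<in>V. E k l}"

definition laplacian :: "'a set \<Rightarrow> ('a \<Rightarrow> 'a \<Rightarrow> bool) \<Rightarrow> ('a \<Rightarrow> real) \<Rightarrow> 'a \<Rightarrow> real" where
  "laplacian V E u k = (\<Sum>l\<in>neighbours V E k. u k - u l)"

definition laplacian_matrix :: "'a set \<Rightarrow> ('a \<Rightarrow> 'a \<Rightarrow> bool) \<Rightarrow> 'a \<Rightarrow> 'a \<Rightarrow> real" where
  "laplacian_matrix V E k l = (if l = k then Defs.degree V E k else 0) - (if E k l then 1 else 0)"

definition dipole :: "'a \<Rightarrow> 'a \<Rightarrow> 'a \<Rightarrow> real" where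
  "dipole i j k = (if k = i then 1 else 0) - (if k = j then 1 else 0)"

lemma degree_eq_card_neighbours: "Defs.degree V E k = real (card (neighbours V E k))"
  by (simp add: Defs.degree_def neighbours_def)

lemma resistance_altdef: "resistance V E i j =
    (THE r. \<exists>v. (\<forall>k\<in>V. laplacian V E v k = dipole i j k) \<and> r = v i - v j)"
  by (simp add: resistance_def laplacian_def neighbours_def dipole_def)

lemma laplacian_diff: "laplacian V E (\<lambda>x. u x - w x) k = laplacian V E u k - laplacian V E w k"
  by (simp add: laplacian_def sum_subtractf[symmetric] algebra_simps)

lemma laplacian_add: "laplacian V E (\<lambda>x. u x + w x) k = laplacian V E u k + laplacian V E w k"
  by (simp add: laplacian_def sum.distrib[symmetric] algebra_simps)

lemma laplacian_minus: "laplacian V E (\<lambda>x. - u x) k = - laplacian V E u k"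
  by (simp add: laplacian_def sum_negf[symmetric])

lemma laplacian_scale: "laplacian V E (\<lambda>x. c * u x) k = c * laplacian V E u k"
  by (simp add: laplacian_def sum_distrib_left algebra_simps)

locale connected_simple_graph =
  fixes V :: "'a set" and E :: "'a \<Rightarrow> 'a \<Rightarrow> bool"
  assumes simple: "simple_graph V E" and connected: "connected_graph V E"
begin

lemma finite_vertices: "finite V"
  using simple by (simp add: simple_graph_def)

lemma adj_vertices: "E x y \<Longrightarrow> x \<in> V \<and> y \<in> V"
  using simple by (simp add: simple_graph_def)

lemma adj_sym: "E x y \<Longrightarrow> E y x"
  using simple by (simp add: simple_graph_def)

lemma adj_irrefl: "\<not> E x x"
  using simple by (simp add: simple_graph_def)

lemma reachable: "x \<in> V \<Longrightarrow> y \<in> V \<Longrightarrow> E\<^sup>*\<^sup>* x y"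
  using connected by (simp add: connected_graph_def)

lemma mem_neighbours [simp]: "l \<in> neighbours V E k \<longleftrightarrow> E k l"
  using adj_vertices by (auto simp: neighbours_def)

lemma finite_neighbours: "finite (neighbours V E k)"
  using finite_vertices by (simp add: neighbours_def)

lemma sum_neighbours_swap:
  "(\<Sum>k\<in>V. \<Sum>l\<in>neighbours V E k. f k l) = (\<Sum>k\<in>V. \<Sum>l\<in>neighbours V E k. f l k)"
proof -
  have "(\<Sum>k\<in>V. \<Sum>l\<in>neighbours V E k. f k l) = (\<Sum>l\<in>V. \<Sum>k\<in>{k\<in>V. E k l}. f k l)"
    unfolding neighbours_def by (rule sum.swap_restrict[OF finite_vertices finite_vertices])
  also have "\<dots> = (\<Sum>l\<in>V. \<Sum>k\<in>neighbours V E l. f k l)"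
    by (intro sum.cong refl) (auto simp: neighbours_def adj_sym)
  finally show ?thesis .
qed

lemma sum_laplacian: "(\<Sum>k\<in>V. laplacian V E u k) = 0"
proof -
  have "(\<Sum>k\<in>V. laplacian V E u k) = (\<Sum>k\<in>V. \<Sum>l\<in>neighbours V E k. u l - u k)"
    unfolding laplacian_def by (rule sum_neighbours_swap)
  also have "\<dots> = - (\<Sum>k\<in>V. laplacian V E u k)"
    by (simp add: laplacian_def sum_negf[symmetric])
  finally show ?thesis by simp
qed

text \<open>Maximum principle: a harmonic function attains its maximum at a vertex, hence at all
  its neighbours, and by connectedness everywhere.\<close>
lemma harmonic_imp_constant:
  assumes harmonic: "\<And>k. k \<in> V \<Longrightarrow> laplacian V E u k = 0" and "x \<in> V" and "y \<in> V"
  shows "u x = u y"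
proof -
  have fin: "finite (u ` V)" using finite_vertices by simp
  define M where "M = Max (u ` V)"
  obtain k0 where k0: "k0 \<in> V" "u k0 = M"
    using Max_in[OF fin] \<open>x \<in> V\<close> unfolding M_def by fastforce
  have le_M: "u z \<le> M" if "z \<in> V" for z
    unfolding M_def using fin that by simp
  have "u z = M" if "E\<^sup>*\<^sup>* k0 z" for z
    using that
  proof (induction rule: rtranclp_induct)
    case base
    then show ?case using k0 by simp
  next
    case (step y z)
    have "y \<in> V" "z \<in> V" using step.hyps(2) adj_vertices by auto
    have "(\<Sum>l\<in>neighbours V E y. u y - u l) = 0"
      using harmonic[OF \<open>y \<in> V\<close>] by (simp add: laplacian_def)
    moreover have "\<forall>l\<in>neighbours V E y. 0 \<le> u y - u l"
      using le_M adj_vertices step.IH by auto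
    moreover have "z \<in> neighbours V E y" using step.hyps(2) by simp
    ultimately have "u y - u z = 0"
      using sum_nonneg_eq_0_iff[of "neighbours V E y" "\<lambda>l. u y - u l"] finite_neighbours
      by blast
    then show ?case using step.IH by simp
  qed
  then show ?thesis using reachable k0(1) \<open>x \<in> V\<close> \<open>y \<in> V\<close> by metis
qed

lemma resistance_eqI:
  assumes "i \<in> V" "j \<in> V" and u: "\<forall>k\<in>V. laplacian V E u k = dipole i j k"
  shows "resistance V E i j = u i - u j"
  unfolding resistance_altdef
proof (rule the_equality)
  fix r assume "\<exists>v. (\<forall>k\<in>V. laplacian V E v k = dipole i j k) \<and> r = v i - v j"
  then obtain v where v: "\<forall>k\<in>V. laplacian V E v k = dipole i j k" and r: "r = v i - v j"
    by blast
  have "(\<lambda>x. v x - u x) i = (\<lambda>x. v x - u x) j"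
    by (rule harmonic_imp_constant[OF _ assms(1,2)]) (simp add: laplacian_diff u v)
  then show "r = u i - u j" using r by simp
qed (use u in blast)

lemma laplacian_eq_matrix_sum:
  assumes "k \<in> V"
  shows "laplacian V E u k = (\<Sum>l\<in>V. laplacian_matrix V E k l * u l)"
proof -
  have "(\<Sum>l\<in>V. laplacian_matrix V E k l * u l)
      = (\<Sum>l\<in>V. if l = k then Defs.degree V E k * u l else 0) - (\<Sum>l\<in>V. if E k l then u l else 0)"
    unfolding sum_subtractf[symmetric]
    by (rule sum.cong) (auto simp: laplacian_matrix_def adj_irrefl)
  also have "\<dots> = Defs.degree V E k * u k - (\<Sum>l\<in>neighbours V E k. u l)"
    using assms finite_vertices by (simp add: neighbours_def sum.inter_filter)
  finally show ?thesis
    by (simp add: laplacian_def sum_subtractf degree_eq_card_neighbours)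
qed

text \<open>Grounding one vertex makes the Laplacian injective: a function vanishing at r and
  harmonic off r is harmonic at r as well, since the Laplacian sums to zero.\<close>
lemma grounded_harmonic_eq_0:
  assumes "r \<in> V" "u r = 0" "\<forall>k\<in>V - {r}. laplacian V E u k = 0" and "k \<in> V"
  shows "u k = 0"
proof -
  have "laplacian V E u r + (\<Sum>k\<in>V - {r}. laplacian V E u k) = 0"
    using sum_laplacian[of u] sum.remove[OF finite_vertices \<open>r \<in> V\<close>, of "laplacian V E u"]
    by simp
  then have "\<forall>k\<in>V. laplacian V E u k = 0" using assms(3) by auto
  then show ?thesis using harmonic_imp_constant assms by metis
qed

lemma laplacian_solvable:
  assumes "(\<Sum>k\<in>V. \<beta> k) = 0"
  shows "\<exists>u. \<forall>k\<in>V. laplacian V E u k = \<beta> k"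
proof (cases "V = {}")
  case False
  then obtain r where r: "r \<in> V" by blast
  let ?M = "laplacian_matrix V E"
  have lap: "laplacian V E u k = (\<Sum>l\<in>V - {r}. ?M k l * u l)" if "k \<in> V" "u r = 0" for u k
    using that r finite_vertices by (simp add: laplacian_eq_matrix_sum sum.remove[of V r])
  have "\<exists>u. \<forall>k\<in>V - {r}. (\<Sum>l\<in>V - {r}. ?M k l * u l) = \<beta> k"
  proof (rule square_linear_system_solvable)
    fix u k assume "\<forall>k\<in>V - {r}. (\<Sum>l\<in>V - {r}. ?M k l * u l) = 0" "k \<in> V - {r}"
    then have "\<forall>k\<in>V - {r}. laplacian V E (u(r := 0)) k = 0" using lap by auto
    then show "u k = 0"
      using grounded_harmonic_eq_0[OF r, of "u(r := 0)" k] \<open>k \<in> V - {r}\<close> by auto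
  qed (use finite_vertices in simp)
  then obtain u where u: "\<forall>k\<in>V - {r}. laplacian V E (u(r := 0)) k = \<beta> k"
    using lap by auto
  have "laplacian V E (u(r := 0)) r + (\<Sum>k\<in>V - {r}. laplacian V E (u(r := 0)) k) = 0"
    using sum_laplacian sum.remove[OF finite_vertices r] by metis
  moreover have "\<beta> r + (\<Sum>k\<in>V - {r}. \<beta> k) = 0"
    using assms sum.remove[OF finite_vertices r, of \<beta>] by simp
  ultimately have "laplacian V E (u(r := 0)) r = \<beta> r" using u by simp
  with u show ?thesis by blast
qed simp

lemma sum_dipole: "i \<in> V \<Longrightarrow> j \<in> V \<Longrightarrow> (\<Sum>k\<in>V. dipole i j k) = 0"
  using finite_vertices by (simp add: dipole_def sum_subtractf)

lemma resistance_self: "i \<in> V \<Longrightarrow> resistance V E i i = 0"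
  using resistance_eqI[of i i "\<lambda>_. 0"] by (simp add: laplacian_def dipole_def)

lemma resistance_sym:
  assumes "i \<in> V" "j \<in> V"
  shows "resistance V E i j = resistance V E j i"
proof -
  obtain u where u: "\<forall>k\<in>V. laplacian V E u k = dipole i j k"
    using laplacian_solvable sum_dipole[OF assms] by blast
  have "\<forall>k\<in>V. laplacian V E (\<lambda>x. - u x) k = dipole j i k"
    using u by (simp add: laplacian_minus dipole_def)
  then show ?thesis
    using resistance_eqI[OF assms u] resistance_eqI[OF assms(2,1)] by simp
qed

lemma sum_off_diagonal:
  assumes "\<And>i. i \<in> V \<Longrightarrow> f i i = 0"
  shows "(\<Sum>i\<in>V. \<Sum>j\<in>V - {i}. f i j) = (\<Sum>i\<in>V. \<Sum>j\<in>V. f i j)"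
proof (rule sum.cong[OF refl])
  fix i assume "i \<in> V"
  then show "(\<Sum>j\<in>V - {i}. f i j) = (\<Sum>j\<in>V. f i j)"
    using sum.remove[OF finite_vertices \<open>i \<in> V\<close>, of "f i"] assms by simp
qed

lemma add_deg_kirchhoff_eq_double_sum:
  "add_deg_kirchhoff V E = (\<Sum>i\<in>V. \<Sum>j\<in>V. Defs.degree V E i * resistance V E i j)"
proof -
  let ?d = "Defs.degree V E" and ?R = "resistance V E"
  have "(\<Sum>i\<in>V. \<Sum>j\<in>V - {i}. (?d i + ?d j) * ?R i j)
      = (\<Sum>i\<in>V. \<Sum>j\<in>V. ?d i * ?R i j) + (\<Sum>i\<in>V. \<Sum>j\<in>V. ?d j * ?R i j)"
    by (subst sum_off_diagonal) (simp_all add: resistance_self distrib_right sum.distrib)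
  also have "(\<Sum>i\<in>V. \<Sum>j\<in>V. ?d j * ?R i j) = (\<Sum>j\<in>V. \<Sum>i\<in>V. ?d j * ?R j i)"
    by (subst sum.swap) (simp add: resistance_sym)
  finally show ?thesis by (simp add: add_deg_kirchhoff_def)
qed

lemma mul_deg_kirchhoff_eq_double_sum:
  "mul_deg_kirchhoff V E
    = (\<Sum>i\<in>V. \<Sum>j\<in>V. Defs.degree V E i * Defs.degree V E j * resistance V E i j) / 2"
  unfolding mul_deg_kirchhoff_def by (subst sum_off_diagonal) (simp_all add: resistance_self)

lemma add_deg_kirchhoff_eq_sum_weighted:
  "add_deg_kirchhoff V E = (\<Sum>a\<in>V. \<Sum>s\<in>V. Defs.degree V E s * resistance V E a s)"
  unfolding add_deg_kirchhoff_eq_double_sum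
  by (subst sum.swap) (simp add: resistance_sym)

lemma mul_deg_kirchhoff_eq_sum_weighted:
  "2 * mul_deg_kirchhoff V E
    = (\<Sum>a\<in>V. Defs.degree V E a * (\<Sum>s\<in>V. Defs.degree V E s * resistance V E a s))"
proof -
  have "2 * mul_deg_kirchhoff V E = (\<Sum>a\<in>V. \<Sum>s\<in>V.
      Defs.degree V E a * Defs.degree V E s * resistance V E a s)"
    by (simp add: mul_deg_kirchhoff_eq_double_sum)
  then show ?thesis by (simp add: sum_distrib_left mult.assoc)
qed

text \<open>The potential of a unit current from a to a ground vertex r.  It is only determined up
  to an additive constant; all formulas below use differences of such potentials.\<close>
definition green :: "'a \<Rightarrow> 'a \<Rightarrow> 'a \<Rightarrow> real" where
  "green r a = (SOME u. \<forall>k\<in>V. laplacian V E u k = dipole a r k)"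

lemma laplacian_green:
  assumes "r \<in> V" "a \<in> V" "k \<in> V"
  shows "laplacian V E (green r a) k = dipole a r k"
proof -
  have "\<exists>u. \<forall>k\<in>V. laplacian V E u k = dipole a r k"
    using laplacian_solvable sum_dipole assms(1,2) by blast
  then have "\<forall>k\<in>V. laplacian V E (green r a) k = dipole a r k"
    unfolding green_def by (rule someI_ex)
  then show ?thesis using assms(3) by blast
qed

lemma resistance_green:
  assumes "r \<in> V" "a \<in> V" "b \<in> V"
  shows "resistance V E a b = green r a a - green r b a - green r a b + green r b b"
proof -
  have "resistance V E a b = (\<lambda>x. green r a x - green r b x) a - (\<lambda>x. green r a x - green r b x) b"
    by (rule resistance_eqI[OF assms(2,3)])
      (simp add: laplacian_diff laplacian_green assms dipole_def)
  then show ?thesis by simp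
qed

section \<open>Edges and Foster's theorem\<close>

lemma edgesE:
  assumes "f \<in> edges V E"
  obtains p q where "f = {p, q}" "E p q" "p \<in> V" "q \<in> V" "p \<noteq> q"
  using assms adj_irrefl unfolding edges_def by blast

lemma edge_subset: "f \<in> edges V E \<Longrightarrow> f \<subseteq> V"
  by (erule edgesE) auto

lemma card_edge: "f \<in> edges V E \<Longrightarrow> card f = 2"
  by (erule edgesE) auto

lemma edge_in_edges: "E a l \<Longrightarrow> {a, l} \<in> edges V E"
  unfolding edges_def using adj_vertices by blast

lemma finite_edges: "finite (edges V E)"
  using edge_subset finite_vertices by (meson Pow_iff finite_Pow_iff finite_subset subsetI)

lemma incident_edges_eq:
  "{e \<in> edges V E. a \<in> e} = (\<lambda>l. {a, l}) ` neighbours V E a"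
proof
  show "{e \<in> edges V E. a \<in> e} \<subseteq> (\<lambda>l. {a, l}) ` neighbours V E a"
  proof safe
    fix e assume "e \<in> edges V E" "a \<in> e"
    from \<open>e \<in> edges V E\<close> obtain p q where "e = {p, q}" "E p q" by (rule edgesE)
    with \<open>a \<in> e\<close> show "e \<in> (\<lambda>l. {a, l}) ` neighbours V E a"
      using adj_sym by (auto simp: insert_commute)
  qed
qed (auto simp: edge_in_edges)

lemma inj_on_neighbour_edge: "inj_on (\<lambda>l. {a, l}) (neighbours V E a)"
  by (rule inj_onI) (metis doubleton_eq_iff adj_irrefl mem_neighbours)

lemma sum_incident_edges:
  "(\<Sum>e\<in>{e \<in> edges V E. a \<in> e}. h e) = (\<Sum>l\<in>neighbours V E a. h {a, l})"
  unfolding incident_edges_eq by (simp add: sum.reindex[OF inj_on_neighbour_edge])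

lemma card_incident_edges: "card {e \<in> edges V E. a \<in> e} = card (neighbours V E a)"
  unfolding incident_edges_eq by (rule card_image[OF inj_on_neighbour_edge])

lemma sum_neighbour_edge_indicator:
  assumes "f \<in> edges V E"
  shows "(\<Sum>l\<in>neighbours V E a. if {a, l} = f then 1 else 0) = (if a \<in> f then 1 else (0::real))"
proof -
  have "(\<Sum>l\<in>neighbours V E a. if {a, l} = f then 1 else 0)
      = (\<Sum>e\<in>{e \<in> edges V E. a \<in> e}. if e = f then 1 else (0::real))"
    by (rule sum_incident_edges[symmetric])
  also have "\<dots> = (if a \<in> f then 1 else 0)"
    using assms finite_edges by (simp add: sum.delta')
  finally show ?thesis .
qed

lemma sum_edges_endpoints:
  "(\<Sum>f\<in>edges V E. \<Sum>s\<in>f. h s f) = (\<Sum>s\<in>V. \<Sum>l\<in>neighbours V E s. h s {s, l})"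
proof -
  have "(\<Sum>f\<in>edges V E. \<Sum>s\<in>f. h s f) = (\<Sum>f\<in>edges V E. \<Sum>s\<in>{s\<in>V. s \<in> f}. h s f)"
    by (intro sum.cong refl arg_cong[where f = "sum _"]) (use edge_subset in blast)
  also have "\<dots> = (\<Sum>s\<in>V. \<Sum>f\<in>{f\<in>edges V E. s \<in> f}. h s f)"
    by (rule sum.swap_restrict[OF finite_edges finite_vertices])
  also have "\<dots> = (\<Sum>s\<in>V. \<Sum>l\<in>neighbours V E s. h s {s, l})"
    by (simp add: sum_incident_edges)
  finally show ?thesis .
qed

lemma sum_edges_endpoints_degree:
  "(\<Sum>f\<in>edges V E. \<Sum>s\<in>f. h s) = (\<Sum>s\<in>V. Defs.degree V E s * h s)"
  by (simp add: sum_edges_endpoints degree_eq_card_neighbours)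

lemma handshake: "(\<Sum>s\<in>V. Defs.degree V E s) = 2 * real (card (edges V E))"
proof -
  have "(\<Sum>f\<in>edges V E. \<Sum>s\<in>f. 1) = (\<Sum>s\<in>V. Defs.degree V E s)"
    using sum_edges_endpoints_degree[of "\<lambda>_. 1"] by simp
  moreover have "(\<Sum>f\<in>edges V E. \<Sum>s\<in>f. 1) = (\<Sum>f\<in>edges V E. 2::real)"
    by (intro sum.cong refl) (simp add: card_edge)
  ultimately show ?thesis by simp
qed

text \<open>Foster's theorem; each edge is counted twice, once per orientation.\<close>
lemma foster_theorem:
  assumes "V \<noteq> {}"
  shows "(\<Sum>f\<in>edges V E. \<Sum>s\<in>f. \<Sum>t\<in>f. resistance V E s t) = 2 * (real (card V) - 1)"
proof -
  obtain r where r: "r \<in> V" using assms by blast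
  let ?g = "green r"
  have "(\<Sum>f\<in>edges V E. \<Sum>s\<in>f. \<Sum>t\<in>f. resistance V E s t)
      = (\<Sum>s\<in>V. \<Sum>l\<in>neighbours V E s. (?g s s - ?g s l) + (?g l l - ?g l s))"
    unfolding sum_edges_endpoints
  proof (intro sum.cong refl)
    fix s l assume "s \<in> V" "l \<in> neighbours V E s"
    then have "l \<in> V" "s \<noteq> l" using adj_vertices adj_irrefl by auto
    then show "(\<Sum>t\<in>{s, l}. resistance V E s t) = (?g s s - ?g s l) + (?g l l - ?g l s)"
      using \<open>s \<in> V\<close> by (simp add: resistance_self resistance_green[OF r])
  qed
  also have "\<dots> = 2 * (\<Sum>s\<in>V. laplacian V E (?g s) s)"
    using sum_neighbours_swap[of "\<lambda>s l. ?g s s - ?g s l"]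
    by (simp add: sum.distrib laplacian_def)
  also have "\<dots> = 2 * (\<Sum>s\<in>V. dipole s r s)"
    using r by (simp add: laplacian_green)
  also have "\<dots> = 2 * (real (card V) - 1)"
    using r finite_vertices by (simp add: dipole_def sum_subtractf)
  finally show ?thesis .
qed

lemma sum_edge_pairs_resistance:
  "(\<Sum>e\<in>edges V E. \<Sum>f\<in>edges V E. \<Sum>s\<in>e. \<Sum>t\<in>f. resistance V E s t)
    = 2 * mul_deg_kirchhoff V E"
proof -
  have "(\<Sum>e\<in>edges V E. \<Sum>f\<in>edges V E. \<Sum>s\<in>e. \<Sum>t\<in>f. resistance V E s t)
      = (\<Sum>e\<in>edges V E. \<Sum>s\<in>e. \<Sum>f\<in>edges V E. \<Sum>t\<in>f. resistance V E s t)"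
    by (rule sum.cong[OF refl]) (rule sum.swap)
  also have "\<dots> = (\<Sum>e\<in>edges V E. \<Sum>s\<in>e. \<Sum>t\<in>V. Defs.degree V E t * resistance V E s t)"
    by (simp add: sum_edges_endpoints_degree)
  also have "\<dots> = 2 * mul_deg_kirchhoff V E"
    by (simp add: sum_edges_endpoints_degree mul_deg_kirchhoff_eq_sum_weighted)
  finally show ?thesis .
qed

end

section \<open>The subdivision\<close>

text \<open>For a source \<sigma> on S(G) and a potential v on G: the new vertex of an edge sits at the sum
  of the potentials of its endpoints (the mean of the doubled ones), shifted by half its own
  source.\<close>
definition subdiv_potential :: "('a \<Rightarrow> real) \<Rightarrow> ('a + 'a set \<Rightarrow> real) \<Rightarrow> 'a + 'a set \<Rightarrow> real"
  where "subdiv_potential v \<sigma> x = (case x of Inl a \<Rightarrow> 2 * v a | Inr f \<Rightarrow> (\<Sum>s\<in>f. v s) + \<sigma> x / 2)"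

context connected_simple_graph
begin

abbreviation "VS \<equiv> subdiv_vertices V E"
abbreviation "ES \<equiv> subdiv_adj V E"

lemma subdiv_adj_simps [simp]:
  "ES (Inl a) (Inr e) \<longleftrightarrow> e \<in> edges V E \<and> a \<in> e"
  "ES (Inr e) (Inl a) \<longleftrightarrow> e \<in> edges V E \<and> a \<in> e"
  "\<not> ES (Inl a) (Inl b)"
  "\<not> ES (Inr e) (Inr f)"
  by (simp_all add: subdiv_adj_def)

lemma mem_subdiv_vertices [simp]:
  "Inl a \<in> VS \<longleftrightarrow> a \<in> V" "Inr e \<in> VS \<longleftrightarrow> e \<in> edges V E"
  by (auto simp: subdiv_vertices_def)

lemma simple_subdivision: "simple_graph VS ES"
  unfolding simple_graph_def
proof (intro conjI allI impI)
  show "finite VS" using finite_vertices finite_edges by (simp add: subdiv_vertices_def)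
next
  fix x y assume "ES x y"
  then show "x \<in> VS" "y \<in> VS" "ES y x"
    by (cases x; cases y; auto dest: edge_subset)+
next
  fix x show "\<not> ES x x" by (cases x) auto
qed

lemma rtranclp_subdiv_adj: "E\<^sup>*\<^sup>* a b \<Longrightarrow> ES\<^sup>*\<^sup>* (Inl a) (Inl b)"
proof (induction rule: rtranclp_induct)
  case (step b c)
  then have "ES (Inl b) (Inr {b, c})" "ES (Inr {b, c}) (Inl c)"
    using edge_in_edges by auto
  with step.IH show ?case by (meson rtranclp.rtrancl_into_rtrancl)
qed simp

lemma connected_subdivision: "connected_graph VS ES"
  unfolding connected_graph_def
proof (intro ballI)
  have near_old: "\<exists>a\<in>V. ES\<^sup>*\<^sup>* z (Inl a) \<and> ES\<^sup>*\<^sup>* (Inl a) z" if "z \<in> VS" for z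
  proof (cases z)
    case (Inr e)
    with that obtain p q where "e = {p, q}" "p \<in> V" by (auto elim: edgesE)
    with Inr that have "ES z (Inl p)" "ES (Inl p) z" by auto
    with \<open>p \<in> V\<close> show ?thesis by blast
  qed (use that in auto)
  fix x y assume "x \<in> VS" "y \<in> VS"
  with near_old obtain a b where "a \<in> V" "ES\<^sup>*\<^sup>* x (Inl a)" "b \<in> V" "ES\<^sup>*\<^sup>* (Inl b) y"
    by meson
  then show "ES\<^sup>*\<^sup>* x y"
    using rtranclp_subdiv_adj[OF reachable] by (meson rtranclp_trans)
qed

lemma connected_simple_graph_subdivision: "connected_simple_graph VS ES"
  using simple_subdivision connected_subdivision by unfold_locales

lemma subdiv_neighbours_Inl: "neighbours VS ES (Inl a) = Inr ` {e \<in> edges V E. a \<in> e}"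
proof -
  have "y \<in> neighbours VS ES (Inl a) \<longleftrightarrow> y \<in> Inr ` {e \<in> edges V E. a \<in> e}" for y
    by (cases y) (auto simp: neighbours_def)
  then show ?thesis by blast
qed

lemma subdiv_neighbours_Inr:
  assumes "f \<in> edges V E" shows "neighbours VS ES (Inr f) = Inl ` f"
proof -
  have "y \<in> neighbours VS ES (Inr f) \<longleftrightarrow> y \<in> Inl ` f" for y
    using assms edge_subset[OF assms] by (cases y) (auto simp: neighbours_def)
  then show ?thesis by blast
qed

lemma degree_subdiv_Inl: "Defs.degree VS ES (Inl a) = Defs.degree V E a"
  by (simp add: degree_eq_card_neighbours subdiv_neighbours_Inl card_image card_incident_edges)

lemma degree_subdiv_Inr: "f \<in> edges V E \<Longrightarrow> Defs.degree VS ES (Inr f) = 2"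
  by (simp add: degree_eq_card_neighbours subdiv_neighbours_Inr card_image card_edge)

lemma sum_subdiv_vertices:
  "(\<Sum>x\<in>VS. h x) = (\<Sum>a\<in>V. h (Inl a)) + (\<Sum>e\<in>edges V E. h (Inr e))"
proof -
  have "Inl ` V \<inter> Inr ` edges V E = {}" by auto
  then show ?thesis
    using finite_vertices finite_edges
    by (simp add: subdiv_vertices_def sum.union_disjoint sum.reindex)
qed

lemma laplacian_subdiv_potential:
  assumes v: "\<And>a. a \<in> V \<Longrightarrow>
      laplacian V E v a = \<sigma> (Inl a) + (\<Sum>l\<in>neighbours V E a. \<sigma> (Inr {a, l})) / 2"
    and "x \<in> VS"
  shows "laplacian VS ES (subdiv_potential v \<sigma>) x = \<sigma> x"
proof (cases x)
  case (Inl a)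
  with \<open>x \<in> VS\<close> have "a \<in> V" by simp
  have "laplacian VS ES (subdiv_potential v \<sigma>) x
      = (\<Sum>e\<in>{e \<in> edges V E. a \<in> e}. 2 * v a - ((\<Sum>s\<in>e. v s) + \<sigma> (Inr e) / 2))"
    by (simp add: Inl laplacian_def subdiv_neighbours_Inl sum.reindex subdiv_potential_def)
  also have "\<dots> = (\<Sum>l\<in>neighbours V E a. (v a - v l) - \<sigma> (Inr {a, l}) / 2)"
    unfolding sum_incident_edges
  proof (intro sum.cong refl)
    fix l assume "l \<in> neighbours V E a"
    then have "l \<noteq> a" using adj_irrefl by auto
    then show "2 * v a - ((\<Sum>s\<in>{a, l}. v s) + \<sigma> (Inr {a, l}) / 2)
        = (v a - v l) - \<sigma> (Inr {a, l}) / 2" by simp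
  qed
  also have "\<dots> = \<sigma> x"
    using v[OF \<open>a \<in> V\<close>] by (simp add: Inl laplacian_def sum_subtractf sum_divide_distrib)
  finally show ?thesis .
next
  case (Inr f)
  with \<open>x \<in> VS\<close> obtain p q where "f = {p, q}" "p \<noteq> q" by (auto elim: edgesE)
  with Inr \<open>x \<in> VS\<close> show ?thesis
    by (simp add: laplacian_def subdiv_neighbours_Inr sum.reindex subdiv_potential_def)
qed

lemma resistance_subdiv_eq:
  assumes "i \<in> VS" "j \<in> VS"
    and v: "\<And>a. a \<in> V \<Longrightarrow>
      laplacian V E v a = dipole i j (Inl a) + (\<Sum>l\<in>neighbours V E a. dipole i j (Inr {a, l})) / 2"
  shows "resistance VS ES i j
    = subdiv_potential v (dipole i j) i - subdiv_potential v (dipole i j) j"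
proof -
  interpret S: connected_simple_graph VS ES by (rule connected_simple_graph_subdivision)
  show ?thesis
    by (rule S.resistance_eqI[OF assms(1,2)]) (simp add: laplacian_subdiv_potential[OF v])
qed

lemma resistance_subdiv_Inl_Inl:
  assumes "a \<in> V" "b \<in> V"
  shows "resistance VS ES (Inl a) (Inl b) = 2 * resistance V E a b"
proof -
  obtain u where u: "\<forall>k\<in>V. laplacian V E u k = dipole a b k"
    using laplacian_solvable sum_dipole[OF assms] by blast
  have "resistance VS ES (Inl a) (Inl b)
      = subdiv_potential u (dipole (Inl a) (Inl b)) (Inl a)
        - subdiv_potential u (dipole (Inl a) (Inl b)) (Inl b)"
    by (rule resistance_subdiv_eq) (use assms u in \<open>auto simp: dipole_def\<close>)
  also have "\<dots> = 2 * (u a - u b)" by (simp add: subdiv_potential_def)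
  finally show ?thesis using resistance_eqI[OF assms u] by simp
qed

lemma resistance_subdiv_Inl_Inr:
  assumes "a \<in> V" "f \<in> edges V E"
  shows "resistance VS ES (Inl a) (Inr f)
    = (\<Sum>s\<in>f. resistance V E a s) - (\<Sum>s\<in>f. \<Sum>t\<in>f. resistance V E s t) / 4 + 1/2"
proof -
  obtain p q where f: "f = {p, q}" "p \<in> V" "q \<in> V" "p \<noteq> q"
    using assms(2) by (rule edgesE) auto
  let ?g = "green a"
  define v where "v = (\<lambda>x. ?g a x - 1/2 * (?g p x + ?g q x))"
  have "(\<Sum>l\<in>neighbours V E k. dipole (Inl a) (Inr f) (Inr {k, l})) = - (if k \<in> f then 1 else 0)"
    for k
    by (simp add: dipole_def sum_negf sum_neighbour_edge_indicator[OF assms(2)])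
  then have "laplacian V E v k = dipole (Inl a) (Inr f) (Inl k)
      + (\<Sum>l\<in>neighbours V E k. dipole (Inl a) (Inr f) (Inr {k, l})) / 2" if "k \<in> V" for k
    using assms(1) f that
    unfolding v_def laplacian_diff laplacian_scale laplacian_add
    by (simp add: laplacian_green dipole_def)
  then have "resistance VS ES (Inl a) (Inr f) = 2 * v a - (v p + v q) + 1/2"
    using resistance_subdiv_eq[of "Inl a" "Inr f" v] assms f
    by (simp add: subdiv_potential_def dipole_def)
  then show ?thesis
    using assms(1) f by (simp add: resistance_green[OF assms(1)] v_def field_simps)
qed

lemma resistance_subdiv_Inr_Inr:
  assumes "e \<in> edges V E" "f \<in> edges V E"
  shows "resistance VS ES (Inr e) (Inr f)
    = (if e = f then 0 else 1) + (\<Sum>s\<in>e. \<Sum>t\<in>f. resistance V E s t) / 2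
      - (\<Sum>s\<in>e. \<Sum>t\<in>e. resistance V E s t) / 4 - (\<Sum>s\<in>f. \<Sum>t\<in>f. resistance V E s t) / 4"
proof -
  obtain p q where e: "e = {p, q}" "p \<in> V" "q \<in> V" "p \<noteq> q"
    using assms(1) by (rule edgesE) auto
  obtain p' q' where f: "f = {p', q'}" "p' \<in> V" "q' \<in> V" "p' \<noteq> q'"
    using assms(2) by (rule edgesE) auto
  let ?g = "green p"
  define v where "v = (\<lambda>x. 1/2 * (?g p x + ?g q x) - 1/2 * (?g p' x + ?g q' x))"
  have "(\<Sum>l\<in>neighbours V E k. dipole (Inr e) (Inr f) (Inr {k, l}))
      = (if k \<in> e then 1 else 0) - (if k \<in> f then 1 else 0)" for k
    by (simp add: dipole_def sum_subtractf sum_neighbour_edge_indicator assms)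
  then have "laplacian V E v k = dipole (Inr e) (Inr f) (Inl k)
      + (\<Sum>l\<in>neighbours V E k. dipole (Inr e) (Inr f) (Inr {k, l})) / 2" if "k \<in> V" for k
    using e f that
    unfolding v_def laplacian_diff laplacian_scale laplacian_add
    by (simp add: laplacian_green dipole_def)
  then have "resistance VS ES (Inr e) (Inr f)
      = (v p + v q) - (v p' + v q') + (if e = f then 0 else 1)"
    using resistance_subdiv_eq[of "Inr e" "Inr f" v] assms e f
    by (simp add: subdiv_potential_def dipole_def)
  then show ?thesis
    using e f by (simp add: resistance_green[OF \<open>p \<in> V\<close>] v_def field_simps)
qed

section \<open>The degree-Kirchhoff index of the subdivision\<close>

lemma sum_resistance_subdiv_Inl_Inr:
  assumes "a \<in> V"
  defines "n \<equiv> real (card V)" and "m \<equiv> real (card (edges V E))"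
  shows "(\<Sum>f\<in>edges V E. resistance VS ES (Inl a) (Inr f))
    = (\<Sum>s\<in>V. Defs.degree V E s * resistance V E a s) + (m - n + 1) / 2"
proof -
  have "(\<Sum>f\<in>edges V E. resistance VS ES (Inl a) (Inr f))
      = (\<Sum>f\<in>edges V E. \<Sum>s\<in>f. resistance V E a s)
        - (\<Sum>f\<in>edges V E. \<Sum>s\<in>f. \<Sum>t\<in>f. resistance V E s t) / 4 + m / 2"
    using assms
    by (simp add: resistance_subdiv_Inl_Inr sum.distrib sum_subtractf sum_divide_distrib m_def)
  also have "\<dots> = (\<Sum>s\<in>V. Defs.degree V E s * resistance V E a s) - (n - 1) / 2 + m / 2"
    using foster_theorem[of] assms(1) by (simp add: sum_edges_endpoints_degree n_def) fastforce
  finally show ?thesis by (simp add: field_simps)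
qed

lemma sum_sum_resistance_subdiv_Inl_Inr:
  defines "n \<equiv> real (card V)" and "m \<equiv> real (card (edges V E))"
  shows "2 * (\<Sum>a\<in>V. \<Sum>f\<in>edges V E. resistance VS ES (Inl a) (Inr f))
    = 2 * add_deg_kirchhoff V E + n * (m - n + 1)"
  by (simp add: sum_resistance_subdiv_Inl_Inr sum.distrib add_deg_kirchhoff_eq_sum_weighted
      n_def m_def cong: sum.cong)

lemma sum_degree_resistance_subdiv_Inl_Inr:
  defines "n \<equiv> real (card V)" and "m \<equiv> real (card (edges V E))"
  shows "(\<Sum>a\<in>V. Defs.degree V E a * (\<Sum>f\<in>edges V E. resistance VS ES (Inl a) (Inr f)))
    = 2 * mul_deg_kirchhoff V E + m * (m - n + 1)"
proof -
  let ?d = "Defs.degree V E"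
  let ?D = "\<lambda>a. \<Sum>s\<in>V. ?d s * resistance V E a s"
  have "(\<Sum>a\<in>V. ?d a * (\<Sum>f\<in>edges V E. resistance VS ES (Inl a) (Inr f)))
      = (\<Sum>a\<in>V. ?d a * ?D a + ?d a * ((m - n + 1) / 2))"
    by (intro sum.cong refl)
      (simp only: sum_resistance_subdiv_Inl_Inr distrib_left n_def m_def)
  also have "\<dots> = (\<Sum>a\<in>V. ?d a * ?D a) + (\<Sum>a\<in>V. ?d a) * ((m - n + 1) / 2)"
    by (simp only: sum.distrib sum_distrib_right)
  also have "\<dots> = 2 * mul_deg_kirchhoff V E + m * (m - n + 1)"
    by (simp add: mul_deg_kirchhoff_eq_sum_weighted handshake m_def)
  finally show ?thesis .
qed

lemma sum_resistance_subdiv_Inr_Inr: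
  assumes "V \<noteq> {}"
  defines "n \<equiv> real (card V)" and "m \<equiv> real (card (edges V E))"
  shows "(\<Sum>e\<in>edges V E. \<Sum>f\<in>edges V E. resistance VS ES (Inr e) (Inr f))
    = m * m - m + mul_deg_kirchhoff V E - m * (n - 1)"
proof -
  let ?Ed = "edges V E" and ?R = "resistance V E"
  define Q where "Q f = (\<Sum>s\<in>f. \<Sum>t\<in>f. ?R s t)" for f
  have "(\<Sum>f\<in>?Ed. if e = f then 0 else 1) = m - 1" if "e \<in> ?Ed" for e
  proof -
    have "(\<Sum>f\<in>?Ed. if e = f then 0 else 1) = (\<Sum>f\<in>?Ed. 1 - (if e = f then 1 else 0 :: real))"
      by (intro sum.cong) auto
    then show ?thesis using that finite_edges by (simp add: sum_subtractf m_def)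
  qed
  then have "(\<Sum>f\<in>?Ed. resistance VS ES (Inr e) (Inr f))
      = (m - 1) + (\<Sum>f\<in>?Ed. \<Sum>s\<in>e. \<Sum>t\<in>f. ?R s t) / 2 - m * Q e / 4 - (\<Sum>f\<in>?Ed. Q f) / 4"
    if "e \<in> ?Ed" for e
    using that
    by (simp add: resistance_subdiv_Inr_Inr sum.distrib sum_subtractf sum_divide_distrib
        flip: Q_def m_def)
  then have "(\<Sum>e\<in>?Ed. \<Sum>f\<in>?Ed. resistance VS ES (Inr e) (Inr f))
      = m * (m - 1) + (\<Sum>e\<in>?Ed. \<Sum>f\<in>?Ed. \<Sum>s\<in>e. \<Sum>t\<in>f. ?R s t) / 2
        - m * (\<Sum>e\<in>?Ed. Q e) / 2"
    by (simp add: sum.distrib sum_subtractf sum_divide_distrib flip: sum_distrib_left m_def)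
      (simp flip: sum_divide_distrib sum_distrib_left)
  then show ?thesis
    using foster_theorem[OF assms(1)] by (simp add: Q_def sum_edge_pairs_resistance n_def field_simps)
qed

lemma add_deg_kirchhoff_subdivision_blocks:
  "add_deg_kirchhoff VS ES
    = 2 * add_deg_kirchhoff V E
      + (\<Sum>a\<in>V. Defs.degree V E a * (\<Sum>f\<in>edges V E. resistance VS ES (Inl a) (Inr f)))
      + 2 * (\<Sum>a\<in>V. \<Sum>f\<in>edges V E. resistance VS ES (Inl a) (Inr f))
      + 2 * (\<Sum>e\<in>edges V E. \<Sum>f\<in>edges V E. resistance VS ES (Inr e) (Inr f))"
proof -
  interpret S: connected_simple_graph VS ES by (rule connected_simple_graph_subdivision)
  let ?d = "Defs.degree V E" and ?RS = "resistance VS ES" and ?Ed = "edges V E"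
  have "add_deg_kirchhoff VS ES
      = (\<Sum>a\<in>V. \<Sum>b\<in>V. ?d a * ?RS (Inl a) (Inl b))
        + (\<Sum>a\<in>V. ?d a * (\<Sum>f\<in>?Ed. ?RS (Inl a) (Inr f)))
        + (\<Sum>e\<in>?Ed. \<Sum>b\<in>V. 2 * ?RS (Inr e) (Inl b))
        + (\<Sum>e\<in>?Ed. \<Sum>f\<in>?Ed. 2 * ?RS (Inr e) (Inr f))"
    by (simp add: S.add_deg_kirchhoff_eq_double_sum sum_subdiv_vertices degree_subdiv_Inl
        degree_subdiv_Inr sum.distrib sum_distrib_left cong: sum.cong)
  also have "(\<Sum>a\<in>V. \<Sum>b\<in>V. ?d a * ?RS (Inl a) (Inl b)) = 2 * add_deg_kirchhoff V E"
    by (simp add: add_deg_kirchhoff_eq_double_sum resistance_subdiv_Inl_Inl sum_distrib_left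
        mult.left_commute cong: sum.cong)
  also have "(\<Sum>e\<in>?Ed. \<Sum>b\<in>V. 2 * ?RS (Inr e) (Inl b))
      = 2 * (\<Sum>a\<in>V. \<Sum>f\<in>?Ed. ?RS (Inl a) (Inr f))"
    by (subst sum.swap) (simp add: S.resistance_sym sum_distrib_left cong: sum.cong)
  finally show ?thesis by (simp add: sum_distrib_left)
qed

end

theorem theorem2p4:
  fixes V :: "'a set" and E :: "'a \<Rightarrow> 'a \<Rightarrow> bool"
  assumes "simple_graph V E" and "connected_graph V E" and "card V \<ge> 2"
  defines "n \<equiv> real (card V)" and "m \<equiv> real (card (edges V E))"
  shows "add_deg_kirchhoff (subdiv_vertices V E) (subdiv_adj V E)
    = 4 * add_deg_kirchhoff V E + 4 * mul_deg_kirchhoff V E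
      + (m + n) * (m - n + 1) + 2 * m * (m - n)"
proof -
  interpret connected_simple_graph V E using assms(1,2) by unfold_locales
  have "V \<noteq> {}" using assms(3) by auto
  show ?thesis
    using sum_degree_resistance_subdiv_Inl_Inr sum_sum_resistance_subdiv_Inl_Inr
      sum_resistance_subdiv_Inr_Inr[OF \<open>V \<noteq> {}\<close>]
    unfolding add_deg_kirchhoff_subdivision_blocks n_def[symmetric] m_def[symmetric]
    by (simp add: algebra_simps)
qed

end
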